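(* Let $M$ be an exact $\mathfrak{K}$-module. Then there are isomorphisms $\ker(1-t_2)/\ker\alpha_{02}\cong\ker N(s_1)/\ker\alpha_{01}$, $\operatorname{im}\alpha_{20}/\operatorname{im}(1-t_2)\cong\operatorname{im}\alpha_{10}/\operatorname{im}N(s_1)$, $\ker(1-t_0)/\ker\alpha_{20}\cong\ker(1-s_1)/\ker\alpha_{21}$, $\operatorname{im}\alpha_{02}/\operatorname{im}(1-t_0)\cong\operatorname{im}\alpha_{12}/\operatorname{im}(1-s_1)$, $\ker N(t_0)/\ker\alpha_{10}\cong\ker(1-s_2)/\ker\alpha_{12}$, $\operatorname{im}\alpha_{01}/\operatorname{im}N(t_0)\cong\operatorname{im}\alpha_{21}/\operatorname{im}(1-s_2)$; in particular, for each quotient $X/Y$ above, $Y\subseteq X$.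
   Context: Fix a prime $p$ and let $N(x)=1+x+\dots+x^{p-1}$. A ($\mathbb{Z}/2$-graded) $\mathfrak{K}$-module $M$ amounts to $\mathbb{Z}/2$-graded abelian groups $M_0,M_1,M_2$ with homomorphisms $\alpha_{jk}=\alpha^M_{jk}\colon M_k\to M_j$ for $j\ne k$ in $\{0,1,2\}$ ($\alpha_{12},\alpha_{21}$ grading-reversing, the others grading-preserving) such that $\alpha_{jk}\circ\alpha_{km}=0$ whenever $\{j,k,m\}=\{0,1,2\}$ and, writing $t_0:=1-\alpha_{02}\alpha_{20}$ on $M_0$, $s_1:=1-\alpha_{12}\alpha_{21}$ on $M_1$, $t_2:=1-\alpha_{20}\alpha_{02}$ and $s_2:=1-\alpha_{21}\alpha_{12}$ on $M_2$: $\alpha_{01}\alpha_{10}=N(t_0)$, $\alpha_{10}\alpha_{01}=N(s_1)$, $N(t_2)+N(s_2)=p\cdot\mathrm{id}_{M_2}$. (This is the module-level form of the presentation of Köhler's ring $\mathfrak{K}$.) $M$ is exact if the cyclic sequences $M_0\xrightarrow{\alpha_{10}}M_1\xrightarrow{\alpha_{21}}M_2\xrightarrow{\alpha_{02}}M_0$ and $M_0\xrightarrow{\alpha_{20}}M_2\xrightarrow{\alpha_{12}}M_1\xrightarrow{\alpha_{01}}M_0$ are exact at every place. *)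

theory Defs
  imports "HOL-Algebra.Group" "HOL-Algebra.Coset" "HOL-Computational_Algebra.Primes"
begin

definition additive :: "('a::ab_group_add \<Rightarrow> 'b::ab_group_add) \<Rightarrow> bool" where
  "additive f \<longleftrightarrow> (\<forall>x y. f (x + y) = f x + f y)"

definition add_subgroup :: "'a::ab_group_add set \<Rightarrow> bool" where
  "add_subgroup S \<longleftrightarrow> 0 \<in> S \<and> (\<forall>x\<in>S. \<forall>y\<in>S. x - y \<in> S)"

definition kernel :: "('a \<Rightarrow> 'b::zero) \<Rightarrow> 'a set" where
  "kernel f = {x. f x = 0}"

definition image :: "('a \<Rightarrow> 'b) \<Rightarrow> 'b set" where
  "image f = range f"

definition subgrp :: "'a::ab_group_add set \<Rightarrow> 'a monoid" where
  "subgrp X = \<lparr>carrier = X, monoid.mult = (+), one = 0\<rparr>"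

definition Nop :: "nat \<Rightarrow> ('a::ab_group_add \<Rightarrow> 'a) \<Rightarrow> 'a \<Rightarrow> 'a" where
  "Nop p f x = (\<Sum>i<p. (f ^^ i) x)"

definition z2_grading :: "'a::ab_group_add set \<Rightarrow> 'a set \<Rightarrow> bool" where
  "z2_grading E Od \<longleftrightarrow> add_subgroup E \<and> add_subgroup Od \<and> E \<inter> Od = {0} \<and>
     (\<forall>x. \<exists>e\<in>E. \<exists>u\<in>Od. x = e + u)"

definition comp :: "'a set \<Rightarrow> 'a set \<Rightarrow> bool \<Rightarrow> 'a set" where
  "comp E Od d = (if d then Od else E)"

definition grading_preserving :: "'a set \<Rightarrow> 'a set \<Rightarrow> 'b set \<Rightarrow> 'b set \<Rightarrow> ('a \<Rightarrow> 'b) \<Rightarrow> bool" where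
  "grading_preserving E Od E' Od' f \<longleftrightarrow> f ` E \<subseteq> E' \<and> f ` Od \<subseteq> Od'"

definition grading_reversing :: "'a set \<Rightarrow> 'a set \<Rightarrow> 'b set \<Rightarrow> 'b set \<Rightarrow> ('a \<Rightarrow> 'b) \<Rightarrow> bool" where
  "grading_reversing E Od E' Od' f \<longleftrightarrow> f ` E \<subseteq> Od' \<and> f ` Od \<subseteq> E'"

text \<open>For subgroups Y \<subseteq> X of a graded group (E,Od) and Y' \<subseteq> X' of a graded group (E',Od'):
  X/Y and X'/Y' are isomorphic as Z/2-graded abelian groups (allowing a parity shift e):
  there is a group isomorphism of the quotient groups sending the class of each homogeneous
  element of degree d to the class of a homogeneous element of degree d + e.\<close>
definition graded_quot_iso ::
  "'a::ab_group_add set \<Rightarrow> 'a set \<Rightarrow> 'a set \<Rightarrow> 'a set \<Rightarrow>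
   'b::ab_group_add set \<Rightarrow> 'b set \<Rightarrow> 'b set \<Rightarrow> 'b set \<Rightarrow> bool" where
  "graded_quot_iso E Od X Y E' Od' X' Y' \<longleftrightarrow>
     add_subgroup X \<and> add_subgroup Y \<and> add_subgroup X' \<and> add_subgroup Y' \<and>
     Y \<subseteq> X \<and> Y' \<subseteq> X' \<and>
     (\<exists>\<phi> e. \<phi> \<in> iso (subgrp X Mod Y) (subgrp X' Mod Y') \<and>
        (\<forall>d. \<forall>x\<in>X \<inter> comp E Od d. \<exists>x'\<in>X' \<inter> comp E' Od' (d \<noteq> e).
            \<phi> (r_coset (subgrp X) Y x) = r_coset (subgrp X') Y' x'))"

record ('a, 'b, 'c) kmod =
  ev0 :: "'a set"  od0 :: "'a set"
  ev1 :: "'b set"  od1 :: "'b set"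
  ev2 :: "'c set"  od2 :: "'c set"
  a01 :: "'b \<Rightarrow> 'a"  a10 :: "'a \<Rightarrow> 'b"
  a02 :: "'c \<Rightarrow> 'a"  a20 :: "'a \<Rightarrow> 'c"
  a12 :: "'c \<Rightarrow> 'b"  a21 :: "'b \<Rightarrow> 'c"

definition t0 :: "('a::ab_group_add, 'b, 'c) kmod \<Rightarrow> 'a \<Rightarrow> 'a" where
  "t0 M x = x - a02 M (a20 M x)"
definition s1 :: "('a, 'b::ab_group_add, 'c) kmod \<Rightarrow> 'b \<Rightarrow> 'b" where
  "s1 M x = x - a12 M (a21 M x)"
definition t2 :: "('a, 'b, 'c::ab_group_add) kmod \<Rightarrow> 'c \<Rightarrow> 'c" where
  "t2 M x = x - a20 M (a02 M x)"
definition s2 :: "('a, 'b, 'c::ab_group_add) kmod \<Rightarrow> 'c \<Rightarrow> 'c" where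
  "s2 M x = x - a21 M (a12 M x)"

definition is_kmod :: "nat \<Rightarrow> ('a::ab_group_add, 'b::ab_group_add, 'c::ab_group_add) kmod \<Rightarrow> bool" where
  "is_kmod p M \<longleftrightarrow>
     z2_grading (ev0 M) (od0 M) \<and> z2_grading (ev1 M) (od1 M) \<and> z2_grading (ev2 M) (od2 M) \<and>
     additive (a01 M) \<and> additive (a10 M) \<and> additive (a02 M) \<and>
     additive (a20 M) \<and> additive (a12 M) \<and> additive (a21 M) \<and>
     grading_preserving (ev1 M) (od1 M) (ev0 M) (od0 M) (a01 M) \<and>
     grading_preserving (ev0 M) (od0 M) (ev1 M) (od1 M) (a10 M) \<and>
     grading_preserving (ev2 M) (od2 M) (ev0 M) (od0 M) (a02 M) \<and>
     grading_preserving (ev0 M) (od0 M) (ev2 M) (od2 M) (a20 M) \<and>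
     grading_reversing (ev2 M) (od2 M) (ev1 M) (od1 M) (a12 M) \<and>
     grading_reversing (ev1 M) (od1 M) (ev2 M) (od2 M) (a21 M) \<and>
     (\<forall>x. a01 M (a12 M x) = 0) \<and> (\<forall>x. a02 M (a21 M x) = 0) \<and>
     (\<forall>x. a10 M (a02 M x) = 0) \<and> (\<forall>x. a12 M (a20 M x) = 0) \<and>
     (\<forall>x. a20 M (a01 M x) = 0) \<and> (\<forall>x. a21 M (a10 M x) = 0) \<and>
     (\<forall>x. a01 M (a10 M x) = Nop p (t0 M) x) \<and>
     (\<forall>x. a10 M (a01 M x) = Nop p (s1 M) x) \<and>
     (\<forall>x. Nop p (t2 M) x + Nop p (s2 M) x = (\<Sum>i<p. x))"

definition exact_kmod :: "('a::ab_group_add, 'b::ab_group_add, 'c::ab_group_add) kmod \<Rightarrow> bool" where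
  "exact_kmod M \<longleftrightarrow>
     kernel (a21 M) = image (a10 M) \<and> kernel (a02 M) = image (a21 M) \<and>
     kernel (a10 M) = image (a02 M) \<and>
     kernel (a12 M) = image (a20 M) \<and> kernel (a01 M) = image (a12 M) \<and>
     kernel (a20 M) = image (a01 M)"

end

theory Submission
  imports Defs
begin

(*
  Since 1 - t2 = a20 a02, N(s1) = a10 a01, 1 - t0 = a02 a20, 1 - s1 = a12 a21, N(t0) = a01 a10 and
  1 - s2 = a21 a12, each of the six isomorphisms has the shape
    ker (g f) / ker f \<cong> ker (g' f') / ker f'   or   im g / im (g f) \<cong> im g' / im (g' f')
  for maps f : A -> C, f' : B -> C, g : C -> A, g' : C -> B with ker g = im f' and ker g' = im f,
  which is what exactness provides.  In the kernel case x corresponds to x' when f x = f' x'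
  (both quotients are im f \<inter> im f'); in the image case g c corresponds to g' c (both quotients
  are C / (im f + im f')).  Such an additive correspondence matching the two subgroups induces an
  isomorphism of the quotients, and it respects the Z/2-gradings because a homogeneous value of a
  parity-shifting additive map has a homogeneous preimage.
*)

lemma add_subgroup_zero: "add_subgroup S \<Longrightarrow> 0 \<in> S"
  by (simp add: add_subgroup_def)

lemma add_subgroup_diff: "add_subgroup S \<Longrightarrow> x \<in> S \<Longrightarrow> y \<in> S \<Longrightarrow> x - y \<in> S"
  by (simp add: add_subgroup_def)

lemma add_subgroup_uminus: "add_subgroup S \<Longrightarrow> x \<in> S \<Longrightarrow> - x \<in> S"
  using add_subgroup_diff[of S 0 x] add_subgroup_zero[of S] by simp

lemma add_subgroup_add: "add_subgroup S \<Longrightarrow> x \<in> S \<Longrightarrow> y \<in> S \<Longrightarrow> x + y \<in> S"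
  using add_subgroup_diff[of S x "- y"] add_subgroup_uminus[of S y] by simp

lemma additive_add: "additive f \<Longrightarrow> f (x + y) = f x + f y"
  by (simp add: additive_def)

lemma additive_zero: "additive f \<Longrightarrow> f 0 = 0"
  using additive_add[of f 0 0] by simp

lemma additive_diff: "additive f \<Longrightarrow> f (x - y) = f x - f y"
  using additive_add[of f "x - y" y] by (simp add: algebra_simps)

lemma additive_comp: "additive f \<Longrightarrow> additive g \<Longrightarrow> additive (\<lambda>x. g (f x))"
  by (simp add: additive_def)

lemma add_subgroup_kernel: "additive f \<Longrightarrow> add_subgroup (kernel f)"
  by (simp add: add_subgroup_def kernel_def additive_zero additive_diff)

lemma add_subgroup_image:
  assumes "additive f"
  shows "add_subgroup (image f)"
  unfolding add_subgroup_def image_def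
proof (intro conjI ballI)
  show "0 \<in> range f"
    using additive_zero[OF assms] by (metis rangeI)
  fix u v assume "u \<in> range f" "v \<in> range f"
  then show "u - v \<in> range f"
    by (auto simp: additive_diff[OF assms, symmetric])
qed

lemma r_coset_subgrp: "r_coset (subgrp X) Y a = (\<lambda>y. y + a) ` Y"
  by (auto simp: r_coset_def subgrp_def)

lemma r_coset_subgrp_eq_iff:
  assumes "add_subgroup Y"
  shows "r_coset (subgrp X) Y a = r_coset (subgrp X) Y b \<longleftrightarrow> a - b \<in> Y"
proof
  assume "r_coset (subgrp X) Y a = r_coset (subgrp X) Y b"
  moreover have "a \<in> r_coset (subgrp X) Y a"
    using add_subgroup_zero[OF assms] by (force simp: r_coset_subgrp)
  ultimately obtain y where "y \<in> Y" "a = y + b"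
    by (auto simp: r_coset_subgrp)
  then show "a - b \<in> Y" by simp
next
  have subset: "r_coset (subgrp X) Y u \<subseteq> r_coset (subgrp X) Y v" if "u - v \<in> Y" for u v
  proof
    fix z assume "z \<in> r_coset (subgrp X) Y u"
    then obtain y where "y \<in> Y" "z = (y + (u - v)) + v"
      by (auto simp: r_coset_subgrp)
    then show "z \<in> r_coset (subgrp X) Y v"
      unfolding r_coset_subgrp using add_subgroup_add[OF assms _ that] by blast
  qed
  assume "a - b \<in> Y"
  moreover have "b - a = - (a - b)" by simp
  ultimately show "r_coset (subgrp X) Y a = r_coset (subgrp X) Y b"
    using subset add_subgroup_uminus[OF assms] by (metis subset_antisym)
qed

lemma set_mult_r_coset_subgrp:
  assumes "add_subgroup Y"
  shows "set_mult (subgrp X) (r_coset (subgrp X) Y a) (r_coset (subgrp X) Y b)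
    = r_coset (subgrp X) Y (a + b)"
proof -
  have "set_mult (subgrp X) (r_coset (subgrp X) Y a) (r_coset (subgrp X) Y b)
      = {(y + a) + (y' + b) | y y'. y \<in> Y \<and> y' \<in> Y}"
    unfolding r_coset_subgrp by (auto simp: set_mult_def subgrp_def)
  also have "\<dots> = {(y + y') + (a + b) | y y'. y \<in> Y \<and> y' \<in> Y}"
    by (simp add: algebra_simps)
  also have "\<dots> = (\<lambda>y. y + (a + b)) ` Y"
  proof
    show "{(y + y') + (a + b) | y y'. y \<in> Y \<and> y' \<in> Y} \<subseteq> (\<lambda>y. y + (a + b)) ` Y"
      using add_subgroup_add[OF assms] by blast
    show "(\<lambda>y. y + (a + b)) ` Y \<subseteq> {(y + y') + (a + b) | y y'. y \<in> Y \<and> y' \<in> Y}"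
      using add_subgroup_zero[OF assms] by force
  qed
  finally show ?thesis by (simp add: r_coset_subgrp)
qed

lemma carrier_subgrp_Mod: "carrier (subgrp X Mod Y) = (\<lambda>a. r_coset (subgrp X) Y a) ` X"
  by (auto simp: FactGroup_def RCOSETS_def subgrp_def)

lemma mult_subgrp_Mod: "monoid.mult (subgrp X Mod Y) A B = set_mult (subgrp X) A B"
  by (simp add: FactGroup_def)

(* The isomorphism is induced by a relation rather than a map: in the kernel case the partner
   of x is only determined modulo Y'. *)
locale subgroup_correspondence =
  fixes X Y :: "'a::ab_group_add set" and X' Y' :: "'b::ab_group_add set"
    and R :: "'a \<Rightarrow> 'b \<Rightarrow> bool"
  assumes add_subgroup_Y: "add_subgroup Y" and add_subgroup_Y': "add_subgroup Y'"
    and Y_subset: "Y \<subseteq> X" and Y'_subset: "Y' \<subseteq> X'"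
    and related_mem: "R x x' \<Longrightarrow> x \<in> X \<and> x' \<in> X'"
    and left_total: "x \<in> X \<Longrightarrow> \<exists>x'. R x x'"
    and right_total: "x' \<in> X' \<Longrightarrow> \<exists>x. R x x'"
    and related_diff: "R a a' \<Longrightarrow> R b b' \<Longrightarrow> R (a - b) (a' - b')"
    and related_Y_iff: "R x x' \<Longrightarrow> x \<in> Y \<longleftrightarrow> x' \<in> Y'"
begin

abbreviation coset :: "'a \<Rightarrow> 'a set" where "coset x \<equiv> r_coset (subgrp X) Y x"
abbreviation coset' :: "'b \<Rightarrow> 'b set" where "coset' x' \<equiv> r_coset (subgrp X') Y' x'"

lemma related_zero: "R 0 0"
proof -
  obtain x' where "R 0 x'"
    using left_total add_subgroup_zero[OF add_subgroup_Y] Y_subset by blast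
  then show ?thesis using related_diff[of 0 x' 0 x'] by simp
qed

lemma related_add: "R a a' \<Longrightarrow> R b b' \<Longrightarrow> R (a + b) (a' + b')"
  using related_diff[of a a' "0 - b" "0 - b'"] related_diff[OF related_zero, of b b'] by simp

lemma add_subgroup_X: "add_subgroup X"
  unfolding add_subgroup_def
proof (intro conjI ballI)
  show "0 \<in> X" using Y_subset add_subgroup_zero[OF add_subgroup_Y] by blast
  fix a b assume "a \<in> X" "b \<in> X"
  then obtain a' b' where "R a a'" "R b b'" using left_total by blast
  then show "a - b \<in> X" using related_diff related_mem by blast
qed

lemma add_subgroup_X': "add_subgroup X'"
  unfolding add_subgroup_def
proof (intro conjI ballI)
  show "0 \<in> X'" using Y'_subset add_subgroup_zero[OF add_subgroup_Y'] by blast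
  fix a' b' assume "a' \<in> X'" "b' \<in> X'"
  then obtain a b where "R a a'" "R b b'" using right_total by blast
  then show "a' - b' \<in> X'" using related_diff related_mem by blast
qed

lemma related_image_coset:
  assumes "R x x'"
  shows "{z'. \<exists>z\<in>coset x. R z z'} = coset' x'"
proof
  show "{z'. \<exists>z\<in>coset x. R z z'} \<subseteq> coset' x'"
  proof
    fix z' assume "z' \<in> {z'. \<exists>z\<in>coset x. R z z'}"
    then obtain y where "y \<in> Y" "R (y + x) z'"
      by (auto simp: r_coset_subgrp)
    then have "z' - x' \<in> Y'"
      using related_Y_iff related_diff[OF _ assms] by fastforce
    then show "z' \<in> coset' x'"
      by (force simp: r_coset_subgrp)
  qed
  show "coset' x' \<subseteq> {z'. \<exists>z\<in>coset x. R z z'}"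
  proof
    fix z' assume "z' \<in> coset' x'"
    then obtain y' where y': "y' \<in> Y'" "z' = y' + x'"
      by (auto simp: r_coset_subgrp)
    then obtain y where "R y y'"
      using right_total Y'_subset by blast
    then have "y \<in> Y" "R (y + x) z'"
      using related_Y_iff y' related_add[OF _ assms] by auto
    then show "z' \<in> {z'. \<exists>z\<in>coset x. R z z'}"
      by (auto simp: r_coset_subgrp)
  qed
qed

lemma iso_subgrp_Mod:
  "(\<lambda>C. {x'. \<exists>x\<in>C. R x x'}) \<in> iso (subgrp X Mod Y) (subgrp X' Mod Y')"
  (is "?\<phi> \<in> _")
proof (rule isoI)
  have carrier: "carrier (subgrp X Mod Y) = coset ` X" "carrier (subgrp X' Mod Y') = coset' ` X'"
    by (simp_all add: carrier_subgrp_Mod)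
  have \<phi>_coset: "?\<phi> (coset x) = coset' x'" if "R x x'" for x x'
    using related_image_coset[OF that] by simp
  have related_rep: "\<exists>x x'. C = coset x \<and> R x x'" if "C \<in> carrier (subgrp X Mod Y)" for C
    using that carrier(1) left_total by blast
  show "?\<phi> \<in> hom (subgrp X Mod Y) (subgrp X' Mod Y')"
  proof (rule homI)
    fix C assume "C \<in> carrier (subgrp X Mod Y)"
    then obtain x x' where "C = coset x" "R x x'"
      using related_rep by blast
    then show "?\<phi> C \<in> carrier (subgrp X' Mod Y')"
      using \<phi>_coset related_mem carrier(2) by simp
  next
    fix C D assume "C \<in> carrier (subgrp X Mod Y)" "D \<in> carrier (subgrp X Mod Y)"
    then obtain x x' y y' where "C = coset x" "R x x'" "D = coset y" "R y y'"
      using related_rep by meson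
    then show "?\<phi> (C \<otimes>\<^bsub>subgrp X Mod Y\<^esub> D) = ?\<phi> C \<otimes>\<^bsub>subgrp X' Mod Y'\<^esub> ?\<phi> D"
      using \<phi>_coset related_add
      by (simp add: mult_subgrp_Mod set_mult_r_coset_subgrp add_subgroup_Y add_subgroup_Y')
  qed
  show "bij_betw ?\<phi> (carrier (subgrp X Mod Y)) (carrier (subgrp X' Mod Y'))"
  proof (rule bij_betw_imageI)
    show "inj_on ?\<phi> (carrier (subgrp X Mod Y))"
    proof (rule inj_onI)
      fix C D assume "C \<in> carrier (subgrp X Mod Y)" "D \<in> carrier (subgrp X Mod Y)"
        and "?\<phi> C = ?\<phi> D"
      moreover obtain x x' y y' where "C = coset x" "R x x'" "D = coset y" "R y y'"
        using related_rep calculation(1,2) by meson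
      ultimately have "x' - y' \<in> Y'"
        using \<phi>_coset r_coset_subgrp_eq_iff[OF add_subgroup_Y'] by simp
      then have "x - y \<in> Y"
        using related_Y_iff related_diff \<open>R x x'\<close> \<open>R y y'\<close> by blast
      then show "C = D"
        using \<open>C = coset x\<close> \<open>D = coset y\<close> r_coset_subgrp_eq_iff[OF add_subgroup_Y] by simp
    qed
    show "?\<phi> ` carrier (subgrp X Mod Y) = carrier (subgrp X' Mod Y')"
    proof (intro equalityI subsetI)
      fix C' assume "C' \<in> ?\<phi> ` carrier (subgrp X Mod Y)"
      then obtain x x' where "C' = coset' x'" "R x x'"
        using related_rep \<phi>_coset by blast
      then show "C' \<in> carrier (subgrp X' Mod Y')"
        using related_mem carrier(2) by blast
    next
      fix C' assume "C' \<in> carrier (subgrp X' Mod Y')"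
      then obtain x x' where "C' = coset' x'" "R x x'"
        using carrier(2) right_total by blast
      moreover have "coset x \<in> carrier (subgrp X Mod Y)"
        using \<open>R x x'\<close> related_mem carrier(1) by blast
      ultimately show "C' \<in> ?\<phi> ` carrier (subgrp X Mod Y)"
        using \<phi>_coset by (simp add: rev_image_eqI)
    qed
  qed
qed

lemma graded_quot_iso_if_homogeneous_lifts:
  assumes lift: "\<And>d x. x \<in> X \<inter> comp E Od d \<Longrightarrow> \<exists>x'\<in>comp E' Od' (d \<noteq> e). R x x'"
  shows "graded_quot_iso E Od X Y E' Od' X' Y'"
  unfolding graded_quot_iso_def
proof (intro conjI exI)
  show "(\<lambda>C. {x'. \<exists>x\<in>C. R x x'}) \<in> iso (subgrp X Mod Y) (subgrp X' Mod Y')"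
    by (rule iso_subgrp_Mod)
  show "\<forall>d. \<forall>x\<in>X \<inter> comp E Od d. \<exists>x'\<in>X' \<inter> comp E' Od' (d \<noteq> e).
      {z'. \<exists>z\<in>coset x. R z z'} = coset' x'"
  proof (intro allI ballI)
    fix d x assume "x \<in> X \<inter> comp E Od d"
    then obtain x' where "x' \<in> comp E' Od' (d \<noteq> e)" "R x x'"
      using lift by blast
    then show "\<exists>x'\<in>X' \<inter> comp E' Od' (d \<noteq> e). {z'. \<exists>z\<in>coset x. R z z'} = coset' x'"
      using related_image_coset related_mem by blast
  qed
qed (simp_all add: add_subgroup_X add_subgroup_X' add_subgroup_Y add_subgroup_Y' Y_subset Y'_subset)

end

lemma add_subgroup_comp: "z2_grading E Od \<Longrightarrow> add_subgroup (comp E Od d)"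
  by (simp add: z2_grading_def comp_def)

lemma comp_opposite_eq_zero:
  "z2_grading E Od \<Longrightarrow> x \<in> comp E Od d \<Longrightarrow> x \<in> comp E Od (\<not> d) \<Longrightarrow> x = 0"
  by (cases d) (auto simp: z2_grading_def comp_def)

lemma comp_decompose:
  assumes "z2_grading E Od"
  shows "\<exists>u\<in>comp E Od d. \<exists>v\<in>comp E Od (\<not> d). x = u + v"
proof -
  obtain u v where "u \<in> E" "v \<in> Od" "x = u + v"
    using assms unfolding z2_grading_def by blast
  show ?thesis
  proof (cases d)
    case True
    have "x = v + u"
      using \<open>x = u + v\<close> by (simp add: add.commute)
    then show ?thesis
      using True \<open>u \<in> E\<close> \<open>v \<in> Od\<close> unfolding comp_def by auto
  next
    case False
    then show ?thesis
      using \<open>u \<in> E\<close> \<open>v \<in> Od\<close> \<open>x = u + v\<close> unfolding comp_def by auto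
  qed
qed

definition shifts_parity :: "'a set \<Rightarrow> 'a set \<Rightarrow> 'b set \<Rightarrow> 'b set \<Rightarrow> bool \<Rightarrow> ('a \<Rightarrow> 'b) \<Rightarrow> bool"
  where "shifts_parity E Od E' Od' c f \<longleftrightarrow> (\<forall>d. \<forall>x\<in>comp E Od d. f x \<in> comp E' Od' (d \<noteq> c))"

lemma shifts_parity_if_grading_preserving:
  "grading_preserving E Od E' Od' f \<Longrightarrow> shifts_parity E Od E' Od' False f"
  unfolding shifts_parity_def grading_preserving_def comp_def by auto

lemma shifts_parity_if_grading_reversing:
  "grading_reversing E Od E' Od' f \<Longrightarrow> shifts_parity E Od E' Od' True f"
  unfolding shifts_parity_def grading_reversing_def comp_def by auto

lemma homogeneous_preimage:
  assumes "z2_grading E Od" and "z2_grading E' Od'" and "additive f"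
    and shift: "shifts_parity E Od E' Od' c f" and "f y \<in> comp E' Od' d"
  shows "\<exists>y0\<in>comp E Od (d \<noteq> c). f y0 = f y"
proof -
  obtain u v where u: "u \<in> comp E Od (d \<noteq> c)" and v: "v \<in> comp E Od (\<not> (d \<noteq> c))"
    and "y = u + v"
    using comp_decompose[OF assms(1)] by blast
  then have fy: "f y = f u + f v"
    using additive_add[OF assms(3)] by simp
  have "f u \<in> comp E' Od' ((d \<noteq> c) \<noteq> c)" and "f v \<in> comp E' Od' ((\<not> (d \<noteq> c)) \<noteq> c)"
    using shift u v unfolding shifts_parity_def by blast+
  then have fu: "f u \<in> comp E' Od' d" and fv: "f v \<in> comp E' Od' (\<not> d)"
    by (cases c; simp)+
  have "f v = f y - f u"
    using fy by simp
  then have "f v \<in> comp E' Od' d"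
    using add_subgroup_diff[OF add_subgroup_comp[OF assms(2)] \<open>f y \<in> comp E' Od' d\<close> fu] by simp
  then have "f v = 0"
    using comp_opposite_eq_zero[OF assms(2) _ fv] by blast
  then show ?thesis
    using u fy by auto
qed

lemma exact_kernel_comp_partner:
  assumes "kernel g = image f'" and "kernel g' = image f" and "g (f x) = 0"
  shows "\<exists>x'. f' x' = f x \<and> g' (f' x') = 0"
proof -
  have "f x \<in> range f'"
    using assms(1,3) unfolding kernel_def image_def by blast
  then obtain x' where "f' x' = f x"
    by (metis rangeE)
  moreover have "g' (f x) = 0"
    using assms(2) unfolding kernel_def image_def by auto
  ultimately show ?thesis by auto
qed

lemma exact_image_comp_transfer:
  assumes "additive g" and "additive g'" and "kernel g = image f'" and "kernel g' = image f"
    and "g c \<in> image (\<lambda>x. g (f x))"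
  shows "g' c \<in> image (\<lambda>y. g' (f' y))"
proof -
  obtain a where "g c = g (f a)"
    using assms(5) unfolding image_def by blast
  then have "c - f a \<in> kernel g"
    using additive_diff[OF assms(1)] unfolding kernel_def by simp
  then obtain b where "c - f a = f' b"
    using assms(3) unfolding image_def by blast
  then have b: "c = f a + f' b"
    by (simp add: algebra_simps)
  have "g' (f a) = 0"
    using assms(4) unfolding kernel_def image_def by auto
  then have "g' c = g' (f' b)"
    using b additive_add[OF assms(2)] by simp
  then show ?thesis
    unfolding image_def by auto
qed

lemma graded_quot_iso_kernel_comp:
  assumes gB: "z2_grading EB OB" and gC: "z2_grading EC OC"
    and "additive f" and f': "additive f'" and "additive g" and "additive g'"
    and shift_f: "shifts_parity EA OA EC OC c f" and shift_f': "shifts_parity EB OB EC OC c' f'"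
    and exact: "kernel g = image f'" "kernel g' = image f"
  shows "graded_quot_iso EA OA (kernel (\<lambda>x. g (f x))) (kernel f)
                         EB OB (kernel (\<lambda>y. g' (f' y))) (kernel f')"
proof -
  define X where "X = kernel (\<lambda>x. g (f x))"
  define X' where "X' = kernel (\<lambda>y. g' (f' y))"
  define R where "R x x' \<longleftrightarrow> x \<in> X \<and> x' \<in> X' \<and> f x = f' x'" for x x'
  have subgroups: "add_subgroup X" "add_subgroup X'"
    unfolding X_def X'_def using assms by (simp_all add: add_subgroup_kernel additive_comp)
  interpret subgroup_correspondence X "kernel f" X' "kernel f'" R
  proof
    show "add_subgroup (kernel f)" "add_subgroup (kernel f')"
      using assms by (simp_all add: add_subgroup_kernel)
    show "kernel f \<subseteq> X" "kernel f' \<subseteq> X'"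
      unfolding X_def X'_def kernel_def using assms by (auto simp: additive_zero)
    show "\<exists>x'. R x x'" if "x \<in> X" for x
      using that exact_kernel_comp_partner[OF exact, of x]
      unfolding R_def X_def X'_def kernel_def by auto
    show "\<exists>x. R x x'" if "x' \<in> X'" for x'
      using that exact_kernel_comp_partner[OF exact(2,1), of x']
      unfolding R_def X_def X'_def kernel_def by auto
    show "R (a - b) (a' - b')" if "R a a'" "R b b'" for a a' b b'
      using that add_subgroup_diff[OF subgroups(1)] add_subgroup_diff[OF subgroups(2)]
      unfolding R_def using assms by (simp add: additive_diff)
  qed (auto simp: R_def kernel_def)
  have "graded_quot_iso EA OA X (kernel f) EB OB X' (kernel f')"
  proof (rule graded_quot_iso_if_homogeneous_lifts)
    fix d x assume x: "x \<in> X \<inter> comp EA OA d"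
    then obtain y where "R x y"
      using left_total by blast
    moreover have "f x \<in> comp EC OC (d \<noteq> c)"
      using x shift_f unfolding shifts_parity_def by blast
    ultimately have "f' y \<in> comp EC OC (d \<noteq> c)"
      unfolding R_def by simp
    then obtain y0 where y0: "y0 \<in> comp EB OB ((d \<noteq> c) \<noteq> c')" "f' y0 = f' y"
      using homogeneous_preimage[OF gB gC f' shift_f'] by blast
    then have "R x y0"
      using \<open>R x y\<close> unfolding R_def X'_def kernel_def by simp
    moreover have "y0 \<in> comp EB OB (d \<noteq> (c \<noteq> c'))"
      using y0(1) by (cases c; cases c'; simp)
    ultimately show "\<exists>x'\<in>comp EB OB (d \<noteq> (c \<noteq> c')). R x x'"
      by blast
  qed
  then show ?thesis
    unfolding X_def X'_def .
qed

lemma graded_quot_iso_image_comp: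
  assumes gC: "z2_grading EC OC" and gD: "z2_grading ED OD"
    and "additive f" and "additive f'" and g: "additive g" and g': "additive g'"
    and shift_g: "shifts_parity EC OC ED OD c g" and shift_g': "shifts_parity EC OC ED' OD' c' g'"
    and exact: "kernel g = image f'" "kernel g' = image f"
  shows "graded_quot_iso ED OD (image g) (image (\<lambda>x. g (f x)))
                         ED' OD' (image g') (image (\<lambda>y. g' (f' y)))"
proof -
  define R where "R x x' \<longleftrightarrow> (\<exists>c. x = g c \<and> x' = g' c)" for x x'
  interpret subgroup_correspondence "image g" "image (\<lambda>x. g (f x))"
    "image g'" "image (\<lambda>y. g' (f' y))" R
  proof
    show "add_subgroup (image (\<lambda>x. g (f x)))" "add_subgroup (image (\<lambda>y. g' (f' y)))"
      using assms by (simp_all add: add_subgroup_image additive_comp)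
    show "R (a - b) (a' - b')" if related: "R a a'" "R b b'" for a a' b b'
    proof -
      obtain u v where "a = g u" "a' = g' u" "b = g v" "b' = g' v"
        using related unfolding R_def by blast
      then have "a - b = g (u - v) \<and> a' - b' = g' (u - v)"
        by (simp add: additive_diff[OF g] additive_diff[OF g'])
      then show ?thesis
        unfolding R_def by blast
    qed
    show "x \<in> image (\<lambda>x. g (f x)) \<longleftrightarrow> x' \<in> image (\<lambda>y. g' (f' y))" if "R x x'" for x x'
      using that exact_image_comp_transfer[OF g g' exact]
        exact_image_comp_transfer[OF g' g exact(2,1)]
      unfolding R_def by blast
  qed (auto simp: R_def image_def)
  show ?thesis
  proof (rule graded_quot_iso_if_homogeneous_lifts)
    fix d x assume x: "x \<in> image g \<inter> comp ED OD d"
    then obtain a where "x = g a"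
      unfolding image_def by blast
    then obtain a0 where a0: "a0 \<in> comp EC OC (d \<noteq> c)" "g a0 = x"
      using homogeneous_preimage[OF gC gD g shift_g] x by blast
    then have "g' a0 \<in> comp ED' OD' ((d \<noteq> c) \<noteq> c')"
      using shift_g' unfolding shifts_parity_def by blast
    then have "g' a0 \<in> comp ED' OD' (d \<noteq> (c \<noteq> c'))"
      by (cases c; cases c'; simp)
    moreover have "R x (g' a0)"
      unfolding R_def using a0 by blast
    ultimately show "\<exists>x'\<in>comp ED' OD' (d \<noteq> (c \<noteq> c')). R x x'"
      by blast
  qed
qed

theorem lemma5p15:
  fixes p :: nat and M :: "('a::ab_group_add, 'b::ab_group_add, 'c::ab_group_add) kmod"
  assumes "prime p" and "is_kmod p M" and "exact_kmod M"
  shows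
  "(graded_quot_iso (ev2 M) (od2 M) (kernel (\<lambda>z. z - t2 M z)) (kernel (a02 M))
                   (ev1 M) (od1 M) (kernel (Nop p (s1 M))) (kernel (a01 M)))
  \<and> (graded_quot_iso (ev2 M) (od2 M) (image (a20 M)) (image (\<lambda>z. z - t2 M z))
                   (ev1 M) (od1 M) (image (a10 M)) (image (Nop p (s1 M))))
  \<and> (graded_quot_iso (ev0 M) (od0 M) (kernel (\<lambda>x. x - t0 M x)) (kernel (a20 M))
                   (ev1 M) (od1 M) (kernel (\<lambda>y. y - s1 M y)) (kernel (a21 M)))
  \<and> (graded_quot_iso (ev0 M) (od0 M) (image (a02 M)) (image (\<lambda>x. x - t0 M x))
                   (ev1 M) (od1 M) (image (a12 M)) (image (\<lambda>y. y - s1 M y)))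
  \<and> (graded_quot_iso (ev0 M) (od0 M) (kernel (Nop p (t0 M))) (kernel (a10 M))
                   (ev2 M) (od2 M) (kernel (\<lambda>z. z - s2 M z)) (kernel (a12 M)))
  \<and> (graded_quot_iso (ev0 M) (od0 M) (image (a01 M)) (image (Nop p (t0 M)))
                   (ev2 M) (od2 M) (image (a21 M)) (image (\<lambda>z. z - s2 M z)))"
proof -
  have gr: "z2_grading (ev0 M) (od0 M)" "z2_grading (ev1 M) (od1 M)" "z2_grading (ev2 M) (od2 M)"
    and ad: "additive (a01 M)" "additive (a10 M)" "additive (a02 M)"
      "additive (a20 M)" "additive (a12 M)" "additive (a21 M)"
    using assms(2) unfolding is_kmod_def by blast+
  have sh: "shifts_parity (ev1 M) (od1 M) (ev0 M) (od0 M) False (a01 M)"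
    "shifts_parity (ev0 M) (od0 M) (ev1 M) (od1 M) False (a10 M)"
    "shifts_parity (ev2 M) (od2 M) (ev0 M) (od0 M) False (a02 M)"
    "shifts_parity (ev0 M) (od0 M) (ev2 M) (od2 M) False (a20 M)"
    "shifts_parity (ev2 M) (od2 M) (ev1 M) (od1 M) True (a12 M)"
    "shifts_parity (ev1 M) (od1 M) (ev2 M) (od2 M) True (a21 M)"
    using assms(2) unfolding is_kmod_def
    by (blast intro: shifts_parity_if_grading_preserving shifts_parity_if_grading_reversing)+
  have ex: "kernel (a21 M) = image (a10 M)" "kernel (a02 M) = image (a21 M)"
    "kernel (a10 M) = image (a02 M)" "kernel (a12 M) = image (a20 M)"
    "kernel (a01 M) = image (a12 M)" "kernel (a20 M) = image (a01 M)"
    using assms(3) unfolding exact_kmod_def by blast+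
  have composites: "(\<lambda>z. z - t2 M z) = (\<lambda>z. a20 M (a02 M z))"
    "(\<lambda>x. x - t0 M x) = (\<lambda>x. a02 M (a20 M x))"
    "(\<lambda>y. y - s1 M y) = (\<lambda>y. a12 M (a21 M y))"
    "(\<lambda>z. z - s2 M z) = (\<lambda>z. a21 M (a12 M z))"
    "Nop p (s1 M) = (\<lambda>y. a10 M (a01 M y))"
    "Nop p (t0 M) = (\<lambda>x. a01 M (a10 M x))"
    using assms(2) by (auto simp: t0_def s1_def t2_def s2_def is_kmod_def)
  show ?thesis
    unfolding composites
    using graded_quot_iso_kernel_comp[OF gr(2,1) ad(3,1,4,2) sh(3,1) ex(6,3)]
      graded_quot_iso_image_comp[OF gr(1,3) ad(3,1,4,2) sh(4,2) ex(6,3)]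
      graded_quot_iso_kernel_comp[OF gr(2,3) ad(4,6,3,5) sh(4,6) ex(2,4)]
      graded_quot_iso_image_comp[OF gr(3,1) ad(4,6,3,5) sh(3,5) ex(2,4)]
      graded_quot_iso_kernel_comp[OF gr(3,2) ad(2,5,1,6) sh(2,5) ex(5,1)]
      graded_quot_iso_image_comp[OF gr(2,1) ad(2,5,1,6) sh(1,6) ex(5,1)]
    by blast
qed

end
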